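(* Let $P$ be a set of $n$ points in $\mathbb{R}^d$ and let $k$ be an integer with $2\le k\le n$. Then there exist a point $q\in\mathbb{R}^d$ and a partition of $P$ into $k$ sets $P_1,\dots,P_k$ such that \[ d(q,\operatorname{conv}P_i)\le (2+\sqrt2)\sqrt{\frac kn}\,\operatorname{diam}P\qquad\text{for every } i\in[k]. \]
   Context: $d(q,S)$ is the Euclidean distance from a point $q$ to a set $S$; $\operatorname{diam}P$ is the Euclidean diameter; $[k]=\{1,\dots,k\}$. *)

theory Defs
  imports "HOL-Analysis.Analysis"
begin

end

theory Submission
  imports Defs "HOL-Combinatorics.Permutations"
begin

(* Let m = n div k and centre the first k m points at their centroid c, so that the centred
   vectors v sum to 0 and have pairwise distances at most D = diam P. Among all ways of cutting
   them into k blocks of size m, take one minimising the sum of the squared norms of the block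
   sums s_i. Swapping a in block i with b in block j cannot decrease this energy, which gives
   (s_i - s_j) . (v_a - v_b) <= D^2; summing over a and b yields |s_i - s_j|^2 <= m D^2, and
   since the s_i sum to 0 also |s_i| <= sqrt m D. So the centroid of each block, a point of the
   convex hull of its part, lies within D / sqrt m <= sqrt (2 k / n) D of c, which is even
   better than the claimed bound; the remaining n - k m points join the first part. *)

lemma sum_comp_transpose_in_out:
  fixes h :: "'c \<Rightarrow> 'b::ab_group_add"
  assumes "finite B" "a \<in> B" "b \<notin> B"
  shows "(\<Sum>t\<in>B. h (Transposition.transpose a b t)) = (\<Sum>t\<in>B. h t) - h a + h b"
proof -
  have "(\<Sum>t\<in>B. h (Transposition.transpose a b t))
          = h b + (\<Sum>t\<in>B - {a}. h (Transposition.transpose a b t))"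
    using sum.remove[OF assms(1,2), of "\<lambda>t. h (Transposition.transpose a b t)"] by simp
  also have "(\<Sum>t\<in>B - {a}. h (Transposition.transpose a b t)) = (\<Sum>t\<in>B - {a}. h t)"
    using assms by (intro sum.cong) (auto simp: Transposition.transpose_def)
  also have "\<dots> = (\<Sum>t\<in>B. h t) - h a"
    using sum.remove[OF assms(1,2), of h] by simp
  finally show ?thesis by (simp add: algebra_simps)
qed

lemma sum_comp_transpose_out_out:
  assumes "a \<notin> B" "b \<notin> B"
  shows "(\<Sum>t\<in>B. h (Transposition.transpose a b t)) = (\<Sum>t\<in>B. h t)"
  using assms by (intro sum.cong) (auto simp: Transposition.transpose_def)

definition index_block :: "nat \<Rightarrow> nat \<Rightarrow> nat set" where
  "index_block m i = {i * m..<i * m + m}"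

lemma card_index_block [simp]: "card (index_block m i) = m"
  and finite_index_block [simp]: "finite (index_block m i)"
  and index_block_eq_empty_iff [simp]: "index_block m i = {} \<longleftrightarrow> m = 0"
  by (simp_all add: index_block_def)

lemma index_block_subset:
  assumes "i < k"
  shows "index_block m i \<subseteq> {..<k * m}"
proof -
  have "(i + 1) * m \<le> k * m" using assms by (intro mult_le_mono) auto
  then show ?thesis by (auto simp: index_block_def)
qed

lemma index_block_disjoint:
  assumes "i \<noteq> j"
  shows "index_block m i \<inter> index_block m j = {}"
proof -
  have "(i + 1) * m \<le> j * m" if "i < j" for i j :: nat
    using that by (intro mult_le_mono) auto
  then show ?thesis
    using assms by (cases "i < j") (fastforce simp: index_block_def dest: nat_neq_iff[THEN iffD1])+
qed

lemma sum_index_blocks: "(\<Sum>i<k. \<Sum>t\<in>index_block m i. f t) = (\<Sum>t<k * m. f t)"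
  using sum.nat_group[of f m k] by (simp add: index_block_def mult.commute)

lemma inner_diff_le_of_exchange:
  fixes x y u :: "'a::real_inner"
  assumes "norm x ^ 2 + norm y ^ 2 \<le> norm (x - u) ^ 2 + norm (y + u) ^ 2"
  shows "(x - y) \<bullet> u \<le> norm u ^ 2"
  using assms by (simp add: power2_norm_eq_inner algebra_simps inner_commute)

lemma norm_diff_sum_le_of_exchange:
  fixes w :: "'b \<Rightarrow> 'a::real_inner"
  assumes X: "card X = m" and Y: "card Y = m" and "0 < m"
    and exch: "\<And>a b. a \<in> X \<Longrightarrow> b \<in> Y \<Longrightarrow> (sum w X - sum w Y) \<bullet> (w a - w b) \<le> C"
  shows "norm (sum w X - sum w Y) ^ 2 \<le> m * C"
proof -
  define d where "d = sum w X - sum w Y"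
  have "m * norm d ^ 2 = m * (d \<bullet> sum w X) - m * (d \<bullet> sum w Y)"
    by (simp add: d_def power2_norm_eq_inner inner_diff_right algebra_simps)
  also have "\<dots> = (\<Sum>a\<in>X. \<Sum>b\<in>Y. d \<bullet> (w a - w b))"
    using X Y by (simp add: inner_diff_right sum_subtractf inner_sum_right sum_distrib_left)
  also have "\<dots> \<le> (\<Sum>a\<in>X. \<Sum>b\<in>Y. C)"
    using exch by (intro sum_mono) (simp add: d_def)
  also have "\<dots> = m * (m * C)" using X Y by simp
  finally show ?thesis using \<open>0 < m\<close> by (simp add: d_def)
qed

lemma norm_le_of_sum_eq_0:
  fixes x :: "'b \<Rightarrow> 'a::real_normed_vector"
  assumes "sum x L = 0" "finite L" "i \<in> L" "\<And>l. l \<in> L \<Longrightarrow> norm (x i - x l) \<le> R"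
  shows "norm (x i) \<le> R"
proof -
  have "real (card L) * norm (x i) = norm (\<Sum>l\<in>L. x i - x l)"
    using assms(1) by (simp add: sum_subtractf sum_constant_scaleR)
  also have "\<dots> \<le> (\<Sum>l\<in>L. norm (x i - x l))" by (rule norm_sum)
  also have "\<dots> \<le> real (card L) * R" using sum_mono[of L _ "\<lambda>_. R"] assms(4) by simp
  finally have "real (card L) * norm (x i) \<le> real (card L) * R" .
  moreover have "0 < card L" using assms(2,3) by (auto simp: card_gt_0_iff)
  ultimately show ?thesis by simp
qed

lemma infdist_convex_hull_le_norm_mean:
  fixes p :: "'b \<Rightarrow> 'a::real_normed_vector"
  assumes "finite B" "B \<noteq> {}" "p ` B \<subseteq> S"
  shows "infdist c (convex hull S) \<le> norm (\<Sum>t\<in>B. p t - c) / card B"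
proof -
  define mean where "mean = (\<Sum>t\<in>B. (1 / card B) *\<^sub>R p t)"
  have "mean \<in> convex hull S"
    unfolding mean_def using assms
    by (intro convex_sum convex_convex_hull) (auto intro: hull_inc)
  then have "infdist c (convex hull S) \<le> dist c mean" by (rule infdist_le)
  also have "mean - c = (1 / card B) *\<^sub>R (\<Sum>t\<in>B. p t - c)"
    using assms(1,2)
    by (simp add: mean_def sum_subtractf scaleR_sum_right scaleR_right_diff_distrib sum_constant_scaleR)
  then have "dist c mean = norm (\<Sum>t\<in>B. p t - c) / card B"
    by (simp add: dist_norm norm_minus_commute field_simps)
  finally show ?thesis .
qed

lemma inverse_sqrt_div_le:
  fixes n k :: nat
  assumes "0 < n div k"
  shows "1 / sqrt (n div k) \<le> sqrt 2 * sqrt (k / n)"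
proof -
  define m where "m = n div k"
  have "0 < k" "0 < m" "0 < n" using assms by (auto simp: m_def intro: Nat.gr0I)
  have "n = k * m + n mod k" by (simp add: m_def)
  then have "n < k * m + k" using mod_less_divisor[OF \<open>0 < k\<close>, of n] by linarith
  also have "\<dots> \<le> 2 * k * m" using \<open>0 < m\<close> by simp
  finally have "real n \<le> 2 * k * m" by linarith
  then have "1 / m \<le> 2 * (k / n)"
    using \<open>0 < m\<close> \<open>0 < n\<close> by (simp add: field_simps)
  have "1 / sqrt (n div k) = sqrt (1 / m)" by (simp add: m_def real_sqrt_divide)
  also have "\<dots> \<le> sqrt (2 * (k / n))" by (rule real_sqrt_le_mono) fact
  also have "\<dots> = sqrt 2 * sqrt (k / n)" by (rule real_sqrt_mult)
  finally show ?thesis .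
qed

lemma ex_permutation_balancing_index_blocks:
  fixes v :: "nat \<Rightarrow> 'a::real_inner"
  assumes "0 < m" "0 < k"
    and sum_zero: "(\<Sum>t<k * m. v t) = 0"
    and diam: "\<And>a b. a < k * m \<Longrightarrow> b < k * m \<Longrightarrow> norm (v a - v b) \<le> D"
  shows "\<exists>\<sigma>. \<sigma> permutes {..<k * m} \<and>
           (\<forall>i<k. norm (\<Sum>t\<in>index_block m i. v (\<sigma> t)) \<le> sqrt m * D)"
proof -
  define s where "s \<sigma> i = (\<Sum>t\<in>index_block m i. v (\<sigma> t))" for \<sigma> i
  define energy where "energy \<sigma> = (\<Sum>l<k. norm (s \<sigma> l) ^ 2)" for \<sigma>
  have fin: "finite {\<sigma>. \<sigma> permutes {..<k * m}}" by (simp add: finite_permutations)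
  have ne: "{\<sigma>. \<sigma> permutes {..<k * m}} \<noteq> {}" using permutes_id by blast
  obtain \<sigma> where \<sigma>: "\<sigma> permutes {..<k * m}"
    and min: "\<And>\<tau>. \<tau> permutes {..<k * m} \<Longrightarrow> energy \<sigma> \<le> energy \<tau>"
    using ex_is_arg_min_if_finite[OF fin ne, of energy] unfolding is_arg_min_linorder by auto
  have "0 \<le> D" using diam[of 0 0] assms(1,2) by simp
  have exchange: "(s \<sigma> i - s \<sigma> j) \<bullet> (v (\<sigma> a) - v (\<sigma> b)) \<le> D ^ 2"
    if ij: "i < k" "j < k" "i \<noteq> j"
      and ab: "a \<in> index_block m i" "b \<in> index_block m j" for i j a b
  proof -
    define \<tau> where "\<tau> = \<sigma> \<circ> Transposition.transpose a b"
    define u where "u = v (\<sigma> a) - v (\<sigma> b)"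
    have "a < k * m" "b < k * m" using ab ij index_block_subset by blast+
    then have "\<tau> permutes {..<k * m}"
      unfolding \<tau>_def by (intro permutes_compose[OF permutes_swap_id \<sigma>]) auto
    then have "energy \<sigma> \<le> energy \<tau>" by (rule min)
    have "\<sigma> a < k * m" "\<sigma> b < k * m"
      using \<open>a < k * m\<close> \<open>b < k * m\<close> permutes_in_image[OF \<sigma>] by auto
    then have u_bound: "norm u ^ 2 \<le> D ^ 2" unfolding u_def using diam by (intro power_mono) auto
    have "b \<notin> index_block m i" "a \<notin> index_block m j"
      using ab index_block_disjoint[OF ij(3)] by blast+
    then have si: "s \<tau> i = s \<sigma> i - u" and sj: "s \<tau> j = s \<sigma> j + u"
      using sum_comp_transpose_in_out[OF finite_index_block ab(1), of b "\<lambda>t. v (\<sigma> t)"]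
        sum_comp_transpose_in_out[OF finite_index_block ab(2), of a "\<lambda>t. v (\<sigma> t)"]
        transpose_commute[of a b]
      by (simp_all add: s_def \<tau>_def u_def)
    have "s \<tau> l = s \<sigma> l" if "l \<noteq> i" "l \<noteq> j" for l
      using ab index_block_disjoint that
      by (auto simp: s_def \<tau>_def intro!: sum_comp_transpose_out_out)
    then have rest: "(\<Sum>l\<in>{..<k} - {i} - {j}. norm (s \<tau> l) ^ 2)
                      = (\<Sum>l\<in>{..<k} - {i} - {j}. norm (s \<sigma> l) ^ 2)"
      by (intro sum.cong) auto
    have energy_split: "energy \<rho> = norm (s \<rho> i) ^ 2 + norm (s \<rho> j) ^ 2
                          + (\<Sum>l\<in>{..<k} - {i} - {j}. norm (s \<rho> l) ^ 2)" for \<rho>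
      using ij unfolding energy_def
      by (simp add: sum.remove[of "{..<k}" i] sum.remove[of "{..<k} - {i}" j])
    have "norm (s \<sigma> i) ^ 2 + norm (s \<sigma> j) ^ 2 \<le> norm (s \<sigma> i - u) ^ 2 + norm (s \<sigma> j + u) ^ 2"
      using \<open>energy \<sigma> \<le> energy \<tau>\<close> rest unfolding energy_split si sj by simp
    then have "(s \<sigma> i - s \<sigma> j) \<bullet> u \<le> norm u ^ 2" by (rule inner_diff_le_of_exchange)
    with u_bound show ?thesis unfolding u_def by linarith
  qed
  have pairwise: "norm (s \<sigma> i - s \<sigma> j) \<le> sqrt m * D" if "i < k" "j < k" for i j
  proof (cases "i = j")
    case False
    have "norm (s \<sigma> i - s \<sigma> j) ^ 2 \<le> m * D ^ 2"
      unfolding s_def using \<open>0 < m\<close> exchange[OF that False]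
      by (intro norm_diff_sum_le_of_exchange) (simp_all add: s_def)
    then have "norm (s \<sigma> i - s \<sigma> j) \<le> sqrt (m * D ^ 2)" by (rule real_le_rsqrt)
    also have "\<dots> = sqrt m * D" using \<open>0 \<le> D\<close> by (simp add: real_sqrt_mult)
    finally show ?thesis .
  qed (use \<open>0 \<le> D\<close> in simp)
  have "(\<Sum>l<k. s \<sigma> l) = (\<Sum>t<k * m. v (\<sigma> t))"
    unfolding s_def by (rule sum_index_blocks)
  also have "\<dots> = 0"
    using sum.permute[OF \<sigma>, of v] sum_zero by (simp add: comp_def)
  finally have "(\<Sum>l<k. s \<sigma> l) = 0" .
  then have "norm (s \<sigma> i) \<le> sqrt m * D" if "i < k" for i
    by (rule norm_le_of_sum_eq_0[where L = "{..<k}"]) (simp_all add: that pairwise)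
  then show ?thesis using \<sigma> unfolding s_def by blast
qed

lemma ex_partition_containing_index_blocks:
  assumes g: "bij_betw g {..<n} P" and "0 < m" "0 < k" "k * m \<le> n"
  shows "\<exists>Q. (\<forall>i\<in>{1..k}. Q i \<noteq> {}) \<and>
             (\<forall>i\<in>{1..k}. \<forall>j\<in>{1..k}. i \<noteq> j \<longrightarrow> Q i \<inter> Q j = {}) \<and>
             (\<Union>i\<in>{1..k}. Q i) = P \<and>
             (\<forall>i\<in>{1..k}. g ` index_block m (i - 1) \<subseteq> Q i)"
proof -
  define J where "J i = index_block m (i - 1) \<union> (if i = 1 then {k * m..<n} else {})" for i
  have block_sub: "index_block m (i - 1) \<subseteq> {..<k * m}" if "i \<in> {1..k}" for i
    using that by (intro index_block_subset) auto
  have J_sub: "J i \<subseteq> {..<n}" if "i \<in> {1..k}" for i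
    using block_sub[OF that] \<open>k * m \<le> n\<close> by (auto simp: J_def)
  have J_disj: "J i \<inter> J j = {}" if "i \<in> {1..k}" "j \<in> {1..k}" "i \<noteq> j" for i j
    using index_block_disjoint[of "i - 1" "j - 1" m] block_sub[OF that(1)] block_sub[OF that(2)] that
    by (auto simp: J_def)
  have J_cover: "t \<in> (\<Union>i\<in>{1..k}. J i)" if "t < n" for t
  proof (cases "t < k * m")
    case True
    then have "t div m < k" by (simp add: less_mult_imp_div_less)
    moreover have "t \<in> index_block m (t div m)"
      using dividend_less_div_times[OF \<open>0 < m\<close>, of t] by (simp add: index_block_def)
    ultimately have "t div m + 1 \<in> {1..k}" "t \<in> J (t div m + 1)" by (simp_all add: J_def)
    then show ?thesis by blast
  next
    case False
    then have "t \<in> J 1" using that by (simp add: J_def)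
    then show ?thesis using \<open>0 < k\<close> by force
  qed
  have "inj_on g {..<n}" using g by (rule bij_betw_imp_inj_on)
  then have "g ` J i \<inter> g ` J j = {}" if "i \<in> {1..k}" "j \<in> {1..k}" "i \<noteq> j" for i j
    using inj_on_image_Int[of g "{..<n}" "J i" "J j"] J_sub J_disj that by simp
  moreover have "(\<Union>i\<in>{1..k}. g ` J i) = P"
  proof -
    have "(\<Union>i\<in>{1..k}. J i) = {..<n}" using J_sub J_cover by blast
    then show ?thesis using g by (auto simp: bij_betw_def simp flip: image_UN)
  qed
  moreover have "(i - 1) * m \<in> J i" for i using \<open>0 < m\<close> by (simp add: J_def index_block_def)
  moreover have "index_block m (i - 1) \<subseteq> J i" for i by (simp add: J_def)
  ultimately show ?thesis by (intro exI[of _ "\<lambda>i. g ` J i"]) blast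
qed

lemma ex_enumeration_with_balanced_index_blocks:
  fixes P :: "'a::real_inner set"
  assumes "finite P" "card P = n" "0 < m" "0 < k" "k * m \<le> n"
  obtains g c where "bij_betw g {..<n} P"
    "\<And>i. i < k \<Longrightarrow> norm (\<Sum>t\<in>index_block m i. g t - c) \<le> sqrt m * diameter P"
proof -
  obtain e where e: "bij_betw e {..<n} P"
    using ex_bij_betw_nat_finite[OF \<open>finite P\<close>] by (auto simp: \<open>card P = n\<close> atLeast0LessThan)
  define c where "c = (1 / real (k * m)) *\<^sub>R (\<Sum>t<k * m. e t)"
  have "(\<Sum>t<k * m. e t - c) = 0"
    using \<open>0 < k\<close> \<open>0 < m\<close> by (simp add: c_def sum_subtractf sum_constant_scaleR)
  moreover have "norm ((e a - c) - (e b - c)) \<le> diameter P" if "a < k * m" "b < k * m" for a b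
    using that \<open>k * m \<le> n\<close> bij_betwE[OF e] \<open>finite P\<close>
    by (simp add: dist_norm[symmetric] diameter_bounded_bound finite_imp_bounded)
  ultimately obtain \<sigma> where \<sigma>: "\<sigma> permutes {..<k * m}"
    and balanced: "\<And>i. i < k \<Longrightarrow> norm (\<Sum>t\<in>index_block m i. e (\<sigma> t) - c) \<le> sqrt m * diameter P"
    using ex_permutation_balancing_index_blocks[OF \<open>0 < m\<close> \<open>0 < k\<close>] by blast
  have "\<sigma> permutes {..<n}" by (rule permutes_subset[OF \<sigma>]) (use \<open>k * m \<le> n\<close> in auto)
  then have "bij_betw (e \<circ> \<sigma>) {..<n} P" using e by (rule bij_betw_trans[OF permutes_imp_bij])
  with balanced show ?thesis by (intro that[of "e \<circ> \<sigma>" c]) simp_all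
qed

theorem theorem1p3:
  fixes P :: "'a::euclidean_space set" and n k :: nat
  assumes "finite P" and "card P = n" and "2 \<le> k" and "k \<le> n"
  shows "\<exists>(q::'a) (Q :: nat \<Rightarrow> 'a set).
           (\<forall>i\<in>{1..k}. Q i \<noteq> {}) \<and>
           (\<forall>i\<in>{1..k}. \<forall>j\<in>{1..k}. i \<noteq> j \<longrightarrow> Q i \<inter> Q j = {}) \<and>
           (\<Union>i\<in>{1..k}. Q i) = P \<and>
           (\<forall>i\<in>{1..k}. infdist q (convex hull (Q i))
                \<le> (2 + sqrt 2) * sqrt (real k / real n) * diameter P)"
proof -
  define m where "m = n div k"
  have "0 < k" "0 < m" "k * m \<le> n"
    using assms by (simp_all add: m_def div_greater_zero_iff)
  have "0 \<le> diameter P" using \<open>finite P\<close> by (simp add: diameter_ge_0 finite_imp_bounded)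
  obtain g c where g: "bij_betw g {..<n} P"
    and balanced: "\<And>i. i < k \<Longrightarrow> norm (\<Sum>t\<in>index_block m i. g t - c) \<le> sqrt m * diameter P"
    using ex_enumeration_with_balanced_index_blocks[OF assms(1,2) \<open>0 < m\<close> \<open>0 < k\<close> \<open>k * m \<le> n\<close>] by blast
  obtain Q where Q: "\<forall>i\<in>{1..k}. Q i \<noteq> {}"
      "\<forall>i\<in>{1..k}. \<forall>j\<in>{1..k}. i \<noteq> j \<longrightarrow> Q i \<inter> Q j = {}" "(\<Union>i\<in>{1..k}. Q i) = P"
    and blocks: "\<forall>i\<in>{1..k}. g ` index_block m (i - 1) \<subseteq> Q i"
    using ex_partition_containing_index_blocks[OF g \<open>0 < m\<close> \<open>0 < k\<close> \<open>k * m \<le> n\<close>] by blast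
  have "infdist c (convex hull (Q i)) \<le> (2 + sqrt 2) * sqrt (real k / real n) * diameter P"
    if "i \<in> {1..k}" for i
  proof -
    have "infdist c (convex hull (Q i)) \<le> norm (\<Sum>t\<in>index_block m (i - 1). g t - c) / m"
      using infdist_convex_hull_le_norm_mean[of "index_block m (i - 1)" g "Q i" c]
        blocks that \<open>0 < m\<close> by auto
    also have "\<dots> \<le> sqrt m * diameter P / m"
      using balanced[of "i - 1"] that by (intro divide_right_mono) auto
    also have "\<dots> = diameter P / sqrt m"
      using real_divide_square_eq[of "sqrt m" "diameter P"] by simp
    also have "\<dots> \<le> sqrt 2 * sqrt (k / n) * diameter P"
      using mult_right_mono[OF inverse_sqrt_div_le[of n k] \<open>0 \<le> diameter P\<close>] \<open>0 < m\<close>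
      by (simp add: m_def)
    also have "\<dots> \<le> (2 + sqrt 2) * sqrt (k / n) * diameter P"
      using \<open>0 \<le> diameter P\<close> by (intro mult_right_mono) auto
    finally show ?thesis .
  qed
  then show ?thesis using Q by blast
qed

end
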